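(* Let $A\in\mathbb{R}^{n\times n}$ with $\rho(A)<1$, $C\in\mathbb{R}^{m\times n}$, and $Q\in\mathbb{R}^{n\times n}$, $R\in\mathbb{R}^{m\times m}$ symmetric positive definite, with $(A,C)$ observable and $(A,Q^{1/2})$ controllable. Let $\bar P$ be the unique stabilizing positive definite solution of $$\bar P = A\bar PA^{\intercal}+Q-(A\bar PA^{\intercal}+Q)C^{\intercal}\big(C(A\bar PA^{\intercal}+Q)C^{\intercal}+R\big)^{-1}C(A\bar PA^{\intercal}+Q),$$ let $P^{OP}=L(A,Q)$ and $P_n=P^{OP}+\bar P$. Fix $\gamma^e$ with $0<\gamma^e<1$ and, for $\mu\in(0,1)$, define $$J^e(\mu)=(1-\gamma^e)(1-\mu)\operatorname{tr}W^e+\gamma^e\operatorname{tr}S^e+(1-\gamma^e)\mu\operatorname{tr}H^e,$$ where $W^e=L(\sqrt{\gamma^e}A,\bar P)$, $S^e=L(\sqrt{\gamma^e}A,Q)$, $H^e=L(\sqrt{\gamma^e}A,P_n)$. Then for all $0<\mu^\star<\mu<1$ we have $J^e(\mu^\star)<J^e(\mu)$, i.e. $J^e$ is strictly increasing on $(0,1)$.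
   Context: For a square matrix $T$ with $\rho(T)<1$ and a symmetric matrix $U$, $L(T,U)$ denotes the unique solution $V$ of $V=TVT^{\intercal}+U$, equivalently $L(T,U)=\sum_{j=0}^{\infty}T^jU(T^{\intercal})^j$. $J^e(\mu)$ is the trace of the steady-state expected estimation error covariance of an eavesdropper when the sensor transmits noise with probability $\mu$ and the eavesdropper's packet dropout probability is $\gamma^e$. *)

theory Defs
  imports "HOL-Analysis.Analysis"
begin

primrec mpow :: "real^'n^'n \<Rightarrow> nat \<Rightarrow> real^'n^'n" where
  "mpow A 0 = mat 1"
| "mpow A (Suc k) = A ** mpow A k"

definition cplx :: "real^'n^'m \<Rightarrow> complex^'n^'m" where
  "cplx A = (\<chi> i j. complex_of_real (A $ i $ j))"

definition spectral_radius :: "real^'n^'n \<Rightarrow> real" where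
  "spectral_radius A =
     Sup {cmod l | l. \<exists>v. v \<noteq> 0 \<and> cplx A *v v = l *s v}"

definition pos_def :: "real^'n^'n \<Rightarrow> bool" where
  "pos_def M \<longleftrightarrow> transpose M = M \<and> (\<forall>x. x \<noteq> 0 \<longrightarrow> x \<bullet> (M *v x) > 0)"

definition pos_semidef :: "real^'n^'n \<Rightarrow> bool" where
  "pos_semidef M \<longleftrightarrow> transpose M = M \<and> (\<forall>x. x \<bullet> (M *v x) \<ge> 0)"

definition msqrt :: "real^'n^'n \<Rightarrow> real^'n^'n" where
  "msqrt Q = (THE B. pos_semidef B \<and> B ** B = Q)"

(* (A,C) observable: the observability matrix [C; CA; ...; CA^(n-1)] has rank n,
   written as: its kernel is trivial *)
definition observable :: "real^'n^'n \<Rightarrow> real^'n^'m \<Rightarrow> bool" where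
  "observable A C \<longleftrightarrow>
     (\<forall>x. (\<forall>k<CARD('n). (C ** mpow A k) *v x = 0) \<longrightarrow> x = 0)"

(* (A,B) controllable: the controllability matrix [B, AB, ..., A^(n-1)B] has rank n,
   written as: its left kernel is trivial *)
definition controllable :: "real^'n^'n \<Rightarrow> real^'k^'n \<Rightarrow> bool" where
  "controllable A B \<longleftrightarrow>
     (\<forall>x. (\<forall>k<CARD('n). x v* (mpow A k ** B) = 0) \<longrightarrow> x = 0)"

definition lyap :: "real^'n^'n \<Rightarrow> real^'n^'n \<Rightarrow> real^'n^'n" where
  "lyap T U = (\<Sum>j. mpow T j ** U ** transpose (mpow T j))"

definition prior :: "real^'n^'n \<Rightarrow> real^'n^'n \<Rightarrow> real^'n^'n \<Rightarrow> real^'n^'n" where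
  "prior A Q P = A ** P ** transpose A + Q"

definition gain :: "real^'n^'n \<Rightarrow> real^'n^'m \<Rightarrow> real^'n^'n \<Rightarrow> real^'m^'m \<Rightarrow> real^'n^'n \<Rightarrow> real^'m^'n" where
  "gain A C Q R P = prior A Q P ** transpose C ** matrix_inv (C ** prior A Q P ** transpose C + R)"

definition riccati_sol :: "real^'n^'n \<Rightarrow> real^'n^'m \<Rightarrow> real^'n^'n \<Rightarrow> real^'m^'m \<Rightarrow> real^'n^'n \<Rightarrow> bool" where
  "riccati_sol A C Q R P \<longleftrightarrow>
     P = prior A Q P - prior A Q P ** transpose C **
           matrix_inv (C ** prior A Q P ** transpose C + R) ** C ** prior A Q P"

definition stabilizing :: "real^'n^'n \<Rightarrow> real^'n^'m \<Rightarrow> real^'n^'n \<Rightarrow> real^'m^'m \<Rightarrow> real^'n^'n \<Rightarrow> bool" where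
  "stabilizing A C Q R P \<longleftrightarrow>
     spectral_radius (A ** (mat 1 - gain A C Q R P ** C)) < 1"

definition Je :: "real^'n^'n \<Rightarrow> real^'n^'n \<Rightarrow> real^'n^'n \<Rightarrow> real \<Rightarrow> real \<Rightarrow> real" where
  "Je A Q Pbar ge mu =
     (let We = lyap (sqrt ge *\<^sub>R A) Pbar;
          Se = lyap (sqrt ge *\<^sub>R A) Q;
          Pn = lyap A Q + Pbar;
          He = lyap (sqrt ge *\<^sub>R A) Pn
      in (1 - ge) * (1 - mu) * trace We + ge * trace Se + (1 - ge) * mu * trace He)"

end

(* With T = sqrt ge *R A, linearity of L(T, -) gives H^e = L(T, P^OP) + W^e, so J^e is affine in mu
   with slope (1 - ge) tr L(T, P^OP). Every term T^j U (T^j)^T of L(T, U) is positive semidefinite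
   when U is, hence L(T, U) is positive semidefinite and tr L(T, U) >= tr U; applied twice this gives
   tr L(T, P^OP) >= tr P^OP >= tr Q > 0. The series converge because rho(A) < 1 forces, through the
   Jordan normal form of A / r for rho(A) < r < 1, the entries of A^k to be O(r^k).
   Only rho(A) < 1 and Q > 0 are needed: the Riccati solution drops out of the slope. *)

theory Submission
  imports Defs "Jordan_Normal_Form.Spectral_Radius"
begin

no_notation Matrix.vec_index (infixl "$" 100)
no_notation Matrix.scalar_prod (infix "\<bullet>" 70)
hide_const (open) Spectral_Radius.spectral_radius

(* The spectral results (Jordan normal form) live in Jordan_Normal_Form's nat-indexed matrices;
   HOL-Analysis matrices are transferred there along a fixed enumeration of the finite index type. *)

definition nat_of_idx :: "'n::finite \<Rightarrow> nat" where
  "nat_of_idx = to_nat_on (UNIV :: 'n set)"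

definition idx_of_nat :: "nat \<Rightarrow> 'n::finite" where
  "idx_of_nat = inv_into UNIV nat_of_idx"

lemma bij_betw_nat_of_idx: "bij_betw (nat_of_idx :: 'n::finite \<Rightarrow> nat) UNIV {..<CARD('n)}"
  unfolding nat_of_idx_def by (rule to_nat_on_finite) simp

lemma bij_betw_idx_of_nat: "bij_betw (idx_of_nat :: nat \<Rightarrow> 'n::finite) {..<CARD('n)} UNIV"
  unfolding idx_of_nat_def by (rule bij_betw_inv_into[OF bij_betw_nat_of_idx])

lemma nat_of_idx_less [simp]: "nat_of_idx (i :: 'n::finite) < CARD('n)"
  using bij_betw_apply[OF bij_betw_nat_of_idx] by blast

lemma idx_of_nat_of_idx [simp]: "idx_of_nat (nat_of_idx i) = i"
  unfolding idx_of_nat_def using bij_betw_nat_of_idx bij_betw_inv_into_left by fastforce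

lemma nat_of_idx_of_nat [simp]: "k < CARD('n::finite) \<Longrightarrow> nat_of_idx (idx_of_nat k :: 'n) = k"
  unfolding idx_of_nat_def using bij_betw_nat_of_idx bij_betw_inv_into_right by fastforce

lemma idx_of_nat_eq_iff:
  "k < CARD('n::finite) \<Longrightarrow> l < CARD('n) \<Longrightarrow> (idx_of_nat k :: 'n) = idx_of_nat l \<longleftrightarrow> k = l"
  by (metis nat_of_idx_of_nat)

lemma sum_UNIV_idx_of_nat: "(\<Sum>i\<in>UNIV. f i) = (\<Sum>k<CARD('n::finite). f (idx_of_nat k :: 'n))"
  by (rule sum.reindex_bij_betw[OF bij_betw_idx_of_nat, symmetric])

definition from_hma_mat :: "'a^'n^'n \<Rightarrow> 'a Matrix.mat" where
  "from_hma_mat M = Matrix.mat CARD('n) CARD('n) (\<lambda>(i, j). M $ idx_of_nat i $ idx_of_nat j)"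

definition from_hma_vec :: "'a^'n \<Rightarrow> 'a Matrix.vec" where
  "from_hma_vec v = Matrix.vec CARD('n) (\<lambda>i. v $ idx_of_nat i)"

lemma from_hma_mat_carrier: "from_hma_mat (M :: 'a^'n^'n) \<in> carrier_mat CARD('n) CARD('n)"
  by (simp add: from_hma_mat_def)

lemma dim_from_hma_mat [simp]:
  "dim_row (from_hma_mat (M :: 'a^'n^'n)) = CARD('n)" "dim_col (from_hma_mat M) = CARD('n)"
  by (simp_all add: from_hma_mat_def)

lemma from_hma_mat_index [simp]:
  "i < CARD('n) \<Longrightarrow> j < CARD('n) \<Longrightarrow>
     from_hma_mat (M :: 'a^'n^'n) $$ (i, j) = M $ idx_of_nat i $ idx_of_nat j"
  by (simp add: from_hma_mat_def)

lemma from_hma_vec_carrier: "from_hma_vec (v :: 'a^'n) \<in> carrier_vec CARD('n)"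
  by (simp add: from_hma_vec_def)

lemma from_hma_vec_index [simp]:
  "i < CARD('n) \<Longrightarrow> Matrix.vec_index (from_hma_vec (v :: 'a^'n)) i = v $ idx_of_nat i"
  by (simp add: from_hma_vec_def)

lemma from_hma_vec_inject: "from_hma_vec v = from_hma_vec w \<longleftrightarrow> v = w"
proof
  assume eq: "from_hma_vec v = from_hma_vec w"
  have "v $ i = w $ i" for i
    using arg_cong[OF eq, of "\<lambda>u. Matrix.vec_index u (nat_of_idx i)"] by simp
  then show "v = w" by (simp add: Finite_Cartesian_Product.vec_eq_iff)
qed simp

lemma from_hma_vec_surj:
  assumes "u \<in> carrier_vec CARD('n::finite)"
  shows "from_hma_vec (\<chi> i :: 'n. Matrix.vec_index u (nat_of_idx i)) = u"
  using assms by (intro eq_vecI) (simp_all add: from_hma_vec_def)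

lemma from_hma_vec_zero [simp]: "from_hma_vec (0 :: 'a::zero^'n) = 0\<^sub>v CARD('n)"
  by (intro eq_vecI) (simp_all add: from_hma_vec_def)

lemma from_hma_vec_smult: "from_hma_vec (c *s (v :: 'a::times^'n)) = c \<cdot>\<^sub>v from_hma_vec v"
  by (intro eq_vecI) (simp_all add: from_hma_vec_def)

lemma from_hma_mat_mult:
  "from_hma_mat ((M :: 'a::semiring_1^'n^'n) ** N) = from_hma_mat M * from_hma_mat N"
proof (intro eq_matI)
  fix i j
  assume "i < dim_row (from_hma_mat M * from_hma_mat N)" "j < dim_col (from_hma_mat M * from_hma_mat N)"
  then have i: "i < CARD('n)" and j: "j < CARD('n)" by simp_all
  have "(from_hma_mat M * from_hma_mat N) $$ (i, j)
      = (\<Sum>k<CARD('n). M $ idx_of_nat i $ idx_of_nat k * N $ idx_of_nat k $ idx_of_nat j)"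
    using i j by (simp add: scalar_prod_def atLeast0LessThan)
  also have "\<dots> = (M ** N) $ idx_of_nat i $ idx_of_nat j"
    by (simp add: matrix_matrix_mult_def sum_UNIV_idx_of_nat[of "\<lambda>k. M $ _ $ k * N $ k $ _"])
  finally show "from_hma_mat (M ** N) $$ (i, j) = (from_hma_mat M * from_hma_mat N) $$ (i, j)"
    using i j by simp
qed simp_all

lemma from_hma_mat_mult_vec:
  "from_hma_mat (M :: 'a::semiring_1^'n^'n) *\<^sub>v from_hma_vec v = from_hma_vec (M *v v)"
proof (intro eq_vecI)
  fix i assume "i < dim_vec (from_hma_vec (M *v v))"
  then have i: "i < CARD('n)" by (simp add: from_hma_vec_def)
  have "Matrix.vec_index (from_hma_mat M *\<^sub>v from_hma_vec v) i
      = (\<Sum>k<CARD('n). M $ idx_of_nat i $ idx_of_nat k * v $ idx_of_nat k)"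
    using i by (simp add: scalar_prod_def atLeast0LessThan from_hma_vec_def)
  also have "\<dots> = (M *v v) $ idx_of_nat i"
    by (simp add: matrix_vector_mult_def sum_UNIV_idx_of_nat[of "\<lambda>k. M $ _ $ k * v $ k"])
  finally show "Matrix.vec_index (from_hma_mat M *\<^sub>v from_hma_vec v) i
      = Matrix.vec_index (from_hma_vec (M *v v)) i"
    using i by simp
qed (simp add: from_hma_vec_def)

lemma from_hma_mat_one:
  "from_hma_mat (Finite_Cartesian_Product.mat 1 :: 'a::semiring_1^'n^'n) = 1\<^sub>m CARD('n)"
  by (intro eq_matI) (simp_all add: Finite_Cartesian_Product.mat_def idx_of_nat_eq_iff)

lemma eigenvalue_from_hma_mat_iff:
  "eigenvalue (from_hma_mat (M :: 'a::comm_ring_1^'n^'n)) l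
    \<longleftrightarrow> (\<exists>v. v \<noteq> 0 \<and> M *v v = l *s v)"
proof
  assume "eigenvalue (from_hma_mat M) l"
  then obtain u where u: "u \<in> carrier_vec CARD('n)" "u \<noteq> 0\<^sub>v CARD('n)"
    "from_hma_mat M *\<^sub>v u = l \<cdot>\<^sub>v u"
    unfolding eigenvalue_def eigenvector_def by auto
  define v where "v = (\<chi> i :: 'n. Matrix.vec_index u (nat_of_idx i))"
  have u_eq: "u = from_hma_vec v"
    unfolding v_def using from_hma_vec_surj[OF u(1)] by simp
  have "v \<noteq> 0" using u(2) u_eq by auto
  moreover have "M *v v = l *s v"
    using u(3) by (simp add: u_eq from_hma_mat_mult_vec from_hma_vec_smult[symmetric] from_hma_vec_inject)
  ultimately show "\<exists>v. v \<noteq> 0 \<and> M *v v = l *s v" by blast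
next
  assume "\<exists>v. v \<noteq> 0 \<and> M *v v = l *s v"
  then obtain v where "v \<noteq> 0" "M *v v = l *s v" by blast
  then show "eigenvalue (from_hma_mat M) l"
    unfolding eigenvalue_def eigenvector_def
    by (intro exI[of _ "from_hma_vec v"])
       (simp add: from_hma_vec_carrier from_hma_mat_mult_vec from_hma_vec_smult
          flip: from_hma_vec_zero from_hma_vec_inject)
qed

lemma cplx_mult: "cplx ((A :: real^'n^'m) ** (B :: real^'k^'n)) = cplx A ** cplx B"
  by (simp add: cplx_def matrix_matrix_mult_def Finite_Cartesian_Product.vec_eq_iff)

lemma cplx_mat_one:
  "cplx (Finite_Cartesian_Product.mat 1 :: real^'n^'n) = Finite_Cartesian_Product.mat 1"
  by (simp add: cplx_def Finite_Cartesian_Product.mat_def Finite_Cartesian_Product.vec_eq_iff)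

lemma cplx_scaleR: "cplx (c *\<^sub>R A) = c *\<^sub>R cplx A"
  by (simp add: cplx_def Finite_Cartesian_Product.vec_eq_iff complex_eq_iff)

lemma scaleR_matrix_vector_mult:
  "((c :: real) *\<^sub>R (M :: 'a::real_algebra_1^'n^'m)) *v v = c *\<^sub>R (M *v v)"
  by (simp add: matrix_vector_mult_def Finite_Cartesian_Product.vec_eq_iff scaleR_sum_right)

lemma mpow_Suc_right: "mpow A (Suc k) = mpow A k ** A"
  by (induction k) (simp_all add: matrix_mul_assoc)

lemma mpow_scaleR: "mpow (c *\<^sub>R A) k = c ^ k *\<^sub>R mpow A k"
  by (induction k) (simp_all add: scalar_matrix_assoc matrix_scalar_ac mult.commute)

lemma from_hma_mat_cplx_mpow:
  "from_hma_mat (cplx (mpow A k)) = from_hma_mat (cplx A) ^\<^sub>m k"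
proof (induction k)
  case (Suc k)
  then show ?case
    unfolding mpow_Suc_right cplx_mult from_hma_mat_mult by simp
qed (simp add: cplx_mat_one from_hma_mat_one)

lemma eigenvalue_norm_le_spectral_radius:
  assumes "v \<noteq> 0" and "cplx A *v v = l *s v"
  shows "cmod l \<le> spectral_radius A"
proof -
  let ?S = "{cmod l | l. \<exists>v. v \<noteq> 0 \<and> cplx A *v v = l *s v}"
  have "?S \<subseteq> norm ` Spectral_Radius.spectrum (from_hma_mat (cplx A))"
    using eigenvalue_from_hma_mat_iff[of "cplx A"] unfolding Spectral_Radius.spectrum_def by blast
  then have "finite ?S"
    using card_finite_spectrum(1)[OF from_hma_mat_carrier] finite_subset by blast
  then show ?thesis
    unfolding Defs.spectral_radius_def using assms by (intro cSup_upper bdd_above_finite) auto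
qed

lemma bounded_mpow_of_eigenvalues_less_1:
  fixes A :: "real^'n^'n"
  assumes "\<And>l v. v \<noteq> 0 \<Longrightarrow> cplx A *v v = l *s v \<Longrightarrow> cmod l < 1"
  obtains c where "\<And>k i j. \<bar>mpow A k $ i $ j\<bar> \<le> c"
proof -
  let ?M = "from_hma_mat (cplx A)"
  have "Spectral_Radius.spectral_radius ?M \<in> norm ` Spectral_Radius.spectrum ?M"
    by (rule spectral_radius_mem_max(1)[OF from_hma_mat_carrier]) simp
  then have "Spectral_Radius.spectral_radius ?M < 1"
    using assms by (auto simp: Spectral_Radius.spectrum_def eigenvalue_from_hma_mat_iff)
  then obtain c where c: "\<And>k. norm_bound (?M ^\<^sub>m k) c"
    using spectral_radius_jnf_norm_bound_less_1_upper_triangular[OF from_hma_mat_carrier] by blast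
  have "\<bar>mpow A k $ i $ j\<bar> \<le> c" for k i j
  proof -
    have "cmod (from_hma_mat (cplx (mpow A k)) $$ (nat_of_idx i, nat_of_idx j)) \<le> c"
      using c[of k] unfolding from_hma_mat_cplx_mpow norm_bound_def by (auto split: if_splits)
    then show ?thesis by (simp add: cplx_def)
  qed
  then show thesis by (rule that)
qed

definition exp_stable :: "real^'n^'n \<Rightarrow> bool" where
  "exp_stable T \<longleftrightarrow> (\<exists>c r. 0 \<le> r \<and> r < 1 \<and> (\<forall>k i j. \<bar>mpow T k $ i $ j\<bar> \<le> c * r ^ k))"

lemma exp_stable_of_spectral_radius_less_1:
  fixes A :: "real^'n^'n"
  assumes "spectral_radius A < 1"
  shows "exp_stable A"
proof -
  define r where "r = (max (spectral_radius A) 0 + 1) / 2"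
  have r: "0 < r" "r < 1" "spectral_radius A < r"
    using assms by (auto simp: r_def)
  have "cmod l < 1" if "v \<noteq> 0" "cplx ((1 / r) *\<^sub>R A) *v v = l *s v" for l v
  proof -
    have "cplx A = r *\<^sub>R cplx ((1 / r) *\<^sub>R A)"
      using r(1) by (simp add: cplx_scaleR)
    then have "cplx A *v v = r *\<^sub>R (l *s v)"
      using that(2) by (simp add: scaleR_matrix_vector_mult)
    then have "cplx A *v v = (r * l) *s v"
      by (simp add: Finite_Cartesian_Product.vec_eq_iff) (simp add: scaleR_conv_of_real)
    then have "r * cmod l \<le> spectral_radius A"
      using eigenvalue_norm_le_spectral_radius[OF that(1)] r(1) by (fastforce simp: norm_mult)
    with r have "r * cmod l < r"
      by linarith
    with r(1) show ?thesis
      by (simp add: mult_less_cancel_left1)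
  qed
  then obtain c where c: "\<And>k i j. \<bar>mpow ((1 / r) *\<^sub>R A) k $ i $ j\<bar> \<le> c"
    using bounded_mpow_of_eigenvalues_less_1 by blast
  have "\<bar>mpow A k $ i $ j\<bar> \<le> c * r ^ k" for k i j
  proof -
    have "mpow A k = r ^ k *\<^sub>R mpow ((1 / r) *\<^sub>R A) k"
      using r(1) by (simp add: mpow_scaleR power_one_over)
    then show ?thesis
      using mult_left_mono[OF c[of k i j], of "r ^ k"] r(1) by (simp add: abs_mult mult.commute)
  qed
  with r show ?thesis unfolding exp_stable_def by (intro exI[of _ c] exI[of _ r]) simp
qed

lemma exp_stable_scaleR:
  assumes "exp_stable T" and "\<bar>s\<bar> \<le> 1"
  shows "exp_stable (s *\<^sub>R T)"
proof -
  obtain c r where r: "0 \<le> r" "r < 1" and c: "\<And>k i j. \<bar>mpow T k $ i $ j\<bar> \<le> c * r ^ k"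
    using assms(1) unfolding exp_stable_def by blast
  have "\<bar>mpow (s *\<^sub>R T) k $ i $ j\<bar> \<le> c * r ^ k" for k i j
  proof -
    have "\<bar>mpow (s *\<^sub>R T) k $ i $ j\<bar> = \<bar>s\<bar> ^ k * \<bar>mpow T k $ i $ j\<bar>"
      by (simp add: mpow_scaleR abs_mult power_abs)
    also have "\<dots> \<le> \<bar>mpow T k $ i $ j\<bar>"
      using assms(2) by (simp add: mult_left_le_one_le power_le_one)
    finally show ?thesis using c[of k i j] by linarith
  qed
  with r show ?thesis unfolding exp_stable_def by blast
qed

abbreviation lyap_term :: "real^'n^'n \<Rightarrow> real^'n^'n \<Rightarrow> nat \<Rightarrow> real^'n^'n" where
  "lyap_term T U k \<equiv> mpow T k ** U ** transpose (mpow T k)"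

lemma norm_le_sum_abs_entries: "norm (M :: real^'n^'m) \<le> (\<Sum>i\<in>UNIV. \<Sum>j\<in>UNIV. \<bar>M $ i $ j\<bar>)"
proof -
  have "norm M \<le> (\<Sum>i\<in>UNIV. norm (M $ i))"
    unfolding norm_vec_def by (rule L2_set_le_sum) simp
  also have "\<dots> \<le> (\<Sum>i\<in>UNIV. \<Sum>j\<in>UNIV. \<bar>M $ i $ j\<bar>)"
    by (intro sum_mono norm_le_l1_cart)
  finally show ?thesis .
qed

lemma abs_congruence_entry_le:
  fixes M U :: "real^'n^'n"
  assumes "\<And>i j. \<bar>M $ i $ j\<bar> \<le> b"
  shows "\<bar>(M ** U ** transpose M) $ i $ j\<bar> \<le> b * b * (\<Sum>a\<in>UNIV. \<Sum>l\<in>UNIV. \<bar>U $ a $ l\<bar>)"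
proof -
  have "(M ** U ** transpose M) $ i $ j = (\<Sum>l\<in>UNIV. (\<Sum>a\<in>UNIV. M $ i $ a * U $ a $ l) * M $ j $ l)"
    by (simp add: matrix_matrix_mult_def transpose_def)
  also have "\<dots> = (\<Sum>l\<in>UNIV. \<Sum>a\<in>UNIV. M $ i $ a * U $ a $ l * M $ j $ l)"
    by (simp add: sum_distrib_right)
  also have "\<bar>\<dots>\<bar> \<le> (\<Sum>l\<in>UNIV. \<Sum>a\<in>UNIV. \<bar>M $ i $ a\<bar> * \<bar>M $ j $ l\<bar> * \<bar>U $ a $ l\<bar>)"
    by (rule order_trans[OF sum_abs]) (intro sum_mono order_trans[OF sum_abs], simp add: abs_mult)
  also have "\<dots> \<le> (\<Sum>l\<in>UNIV. \<Sum>a\<in>UNIV. b * b * \<bar>U $ a $ l\<bar>)"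
    using assms by (intro sum_mono mult_right_mono mult_mono) (auto intro: order_trans[OF abs_ge_zero])
  also have "\<dots> = b * b * (\<Sum>a\<in>UNIV. \<Sum>l\<in>UNIV. \<bar>U $ a $ l\<bar>)"
    by (subst sum.swap) (simp add: sum_distrib_left)
  finally show ?thesis .
qed

lemma lyap_sums:
  fixes T U :: "real^'n^'n"
  assumes "exp_stable T"
  shows "lyap_term T U sums lyap T U"
proof -
  obtain c r where r: "0 \<le> r" "r < 1" and c: "\<And>k i j. \<bar>mpow T k $ i $ j\<bar> \<le> c * r ^ k"
    using assms unfolding exp_stable_def by blast
  define K where "K = (\<Sum>a\<in>UNIV. \<Sum>l\<in>UNIV. \<bar>U $ a $ l\<bar>)"
  have "norm (lyap_term T U k) \<le> (CARD('n) * CARD('n) * c * c * K) * (r * r) ^ k" for k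
  proof -
    have entry: "\<bar>lyap_term T U k $ i $ j\<bar> \<le> (c * r ^ k) * (c * r ^ k) * K" for i j
      unfolding K_def by (rule abs_congruence_entry_le) (rule c)
    have "norm (lyap_term T U k)
        \<le> (\<Sum>i\<in>(UNIV :: 'n set). \<Sum>j\<in>(UNIV :: 'n set). (c * r ^ k) * (c * r ^ k) * K)"
      by (intro order_trans[OF norm_le_sum_abs_entries] sum_mono entry)
    then show ?thesis by (simp add: power_mult_distrib mult_ac)
  qed
  moreover have "summable (\<lambda>k. (CARD('n) * CARD('n) * c * c * K) * (r * r) ^ k)"
    using r abs_square_less_1[of r] by (intro summable_mult summable_geometric) (simp add: power2_eq_square)
  ultimately have "summable (lyap_term T U)"
    by (rule summable_comparison_test'[rotated])
  then show ?thesis unfolding lyap_def by (rule summable_sums)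
qed

lemma matrix_add_rdistrib: "((A :: 'a::semiring_1^'n^'m) + B) ** C = A ** C + B ** C"
  by (vector matrix_matrix_mult_def sum.distrib[symmetric] field_simps)

lemma lyap_add:
  assumes "exp_stable T"
  shows "lyap T (U + V) = lyap T U + lyap T V"
proof -
  have "lyap_term T (U + V) = (\<lambda>k. lyap_term T U k + lyap_term T V k)"
    by (simp add: matrix_add_ldistrib matrix_add_rdistrib)
  then have "lyap_term T (U + V) sums (lyap T U + lyap T V)"
    using sums_add[OF lyap_sums[OF assms] lyap_sums[OF assms]] by simp
  then show ?thesis
    by (rule sums_unique2[OF lyap_sums[OF assms]])
qed

lemma pos_semidefD: "pos_semidef U \<Longrightarrow> 0 \<le> x \<bullet> (U *v x)"
  by (simp add: pos_semidef_def)

lemma pos_def_imp_pos_semidef: "pos_def U \<Longrightarrow> pos_semidef U"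
  unfolding pos_def_def pos_semidef_def by (metis inner_zero_left less_eq_real_def)

lemma pos_semidef_congruence:
  assumes "pos_semidef U"
  shows "pos_semidef (M ** U ** transpose M)"
  unfolding pos_semidef_def
proof (intro conjI allI)
  show "transpose (M ** U ** transpose M) = M ** U ** transpose M"
    using assms by (simp add: pos_semidef_def matrix_transpose_mul matrix_mul_assoc)
  fix x
  have "x \<bullet> ((M ** U ** transpose M) *v x) = x \<bullet> (M *v (U *v (transpose M *v x)))"
    by (simp only: matrix_vector_mul_assoc matrix_mul_assoc)
  also have "\<dots> = (transpose M *v x) \<bullet> (U *v (transpose M *v x))"
    by (metis dot_lmul_matrix transpose_matrix_vector)
  finally show "0 \<le> x \<bullet> ((M ** U ** transpose M) *v x)"
    using assms by (simp only: pos_semidefD)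
qed

lemma transpose_add: "transpose ((A :: 'a::semiring_1^'n^'m) + B) = transpose A + transpose B"
  by (vector transpose_def)

lemma bounded_linear_transpose: "bounded_linear (transpose :: real^'n^'m \<Rightarrow> real^'m^'n)"
  unfolding linear_conv_bounded_linear[symmetric] by (intro linearI transpose_add transpose_scalar)

lemma bounded_linear_quadratic_form: "bounded_linear (\<lambda>X :: real^'n^'n. x \<bullet> (X *v x))"
  unfolding linear_conv_bounded_linear[symmetric] by (intro linearI)
     (simp_all add: matrix_vector_mult_add_rdistrib inner_add_right scaleR_matrix_vector_assoc[symmetric])

lemma bounded_linear_trace: "bounded_linear (trace :: real^'n^'n \<Rightarrow> real)"
  unfolding linear_conv_bounded_linear[symmetric]
  by (intro linearI) (simp_all add: trace_add trace_def sum_distrib_left)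

lemma pos_semidef_lyap:
  fixes T U :: "real^'n^'n"
  assumes "exp_stable T" and "pos_semidef U"
  shows "pos_semidef (lyap T U)"
  unfolding pos_semidef_def
proof (intro conjI allI)
  have term_psd: "pos_semidef (lyap_term T U k)" for k
    using assms(2) by (rule pos_semidef_congruence)
  then have "transpose (lyap_term T U k) = lyap_term T U k" for k
    unfolding pos_semidef_def by blast
  then have term_sym: "(\<lambda>k. transpose (lyap_term T U k)) = lyap_term T U"
    by (rule ext)
  have "lyap_term T U sums transpose (lyap T U)"
    using bounded_linear.sums[OF bounded_linear_transpose lyap_sums[OF assms(1), of U]]
    unfolding term_sym .
  then show "transpose (lyap T U) = lyap T U"
    by (rule sums_unique2[OF _ lyap_sums[OF assms(1), of U]])
  fix x :: "real^'n"
  have "0 \<le> x \<bullet> (lyap_term T U k *v x)" for k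
    using term_psd by (rule pos_semidefD)
  moreover have "(\<lambda>k. x \<bullet> (lyap_term T U k *v x)) sums (x \<bullet> (lyap T U *v x))"
    by (rule bounded_linear.sums[OF bounded_linear_quadratic_form lyap_sums[OF assms(1), of U]])
  ultimately show "0 \<le> x \<bullet> (lyap T U *v x)"
    by (rule sums_le[OF _ sums_zero])
qed

lemma diagonal_entry_eq_quadratic_form: "M $ i $ i = axis i 1 \<bullet> (M *v axis i (1 :: real))"
  by (simp add: matrix_vector_mult_basis inner_axis' column_def)

lemma trace_nonneg_pos_semidef: "pos_semidef U \<Longrightarrow> 0 \<le> trace U"
  unfolding trace_def diagonal_entry_eq_quadratic_form
  by (intro sum_nonneg pos_semidefD)

lemma trace_pos_pos_def:
  assumes "pos_def U"
  shows "0 < trace U"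
  unfolding trace_def diagonal_entry_eq_quadratic_form
  using assms by (intro sum_pos) (auto simp: pos_def_def axis_eq_0_iff)

lemma trace_le_trace_lyap:
  assumes "exp_stable T" and "pos_semidef U"
  shows "trace U \<le> trace (lyap T U)"
proof -
  have sums: "(\<lambda>k. trace (lyap_term T U k)) sums trace (lyap T U)"
    by (rule bounded_linear.sums[OF bounded_linear_trace lyap_sums[OF assms(1), of U]])
  have "(\<Sum>k\<in>{0}. trace (lyap_term T U k)) \<le> (\<Sum>k. trace (lyap_term T U k))"
    using assms(2)
    by (intro sum_le_suminf sums_summable[OF sums] trace_nonneg_pos_semidef pos_semidef_congruence) auto
  then show ?thesis
    using sums_unique[OF sums] by simp
qed

lemma Je_diff:
  assumes "exp_stable (sqrt ge *\<^sub>R A)"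
  shows "Je A Q Pbar ge mu - Je A Q Pbar ge mu'
    = (1 - ge) * (mu - mu') * trace (lyap (sqrt ge *\<^sub>R A) (lyap A Q))"
  unfolding Je_def Let_def lyap_add[OF assms] trace_add by (simp add: algebra_simps)

theorem lemma4:
  fixes A Q Pbar :: "real^'n^'n" and C :: "real^'n^'m" and R :: "real^'m^'m"
    and ge mu_star mu :: real
  assumes "spectral_radius A < 1"
    and "pos_def Q" and "pos_def R"
    and "observable A C" and "controllable A (msqrt Q)"
    and "pos_def Pbar" and "riccati_sol A C Q R Pbar" and "stabilizing A C Q R Pbar"
    and "0 < ge" and "ge < 1"
    and "0 < mu_star" and "mu_star < mu" and "mu < 1"
  shows "Je A Q Pbar ge mu_star < Je A Q Pbar ge mu"
proof -
  have stable_A: "exp_stable A"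
    using assms(1) by (rule exp_stable_of_spectral_radius_less_1)
  have stable_T: "exp_stable (sqrt ge *\<^sub>R A)"
    using assms(9,10) by (intro exp_stable_scaleR[OF stable_A]) simp
  have psd_Q: "pos_semidef Q"
    using assms(2) by (rule pos_def_imp_pos_semidef)
  have "0 < trace Q"
    using assms(2) by (rule trace_pos_pos_def)
  also have "\<dots> \<le> trace (lyap A Q)"
    using stable_A psd_Q by (rule trace_le_trace_lyap)
  also have "\<dots> \<le> trace (lyap (sqrt ge *\<^sub>R A) (lyap A Q))"
    using stable_T pos_semidef_lyap[OF stable_A psd_Q] by (rule trace_le_trace_lyap)
  finally have "0 < (1 - ge) * (mu - mu_star) * trace (lyap (sqrt ge *\<^sub>R A) (lyap A Q))"
    using assms(10,12) by simp
  then show ?thesis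
    using Je_diff[OF stable_T, of Q Pbar mu mu_star] by simp
qed

end
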